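(* Let $h$ be the morphism on the alphabet $\{1,3,4\}$ given by $h(1)=14$, $h(3)=14$, $h(4)=3$. For all $n\ge5$ one has (i) $\Delta C_Z(\Psi_n)=h^{n-4}(3)$ and (ii) $\Delta C_Z(\Lambda_n)=h^{n-5}(3)$.
   Context: Fibonacci numbers: $F_0=0$, $F_1=1$, $F_n=F_{n-1}+F_{n-2}$. Every integer $N\ge0$ has a unique Zeckendorf expansion $N=\sum_{i\ge0}d_i(N)F_{i+2}$ with $d_i(N)\in\{0,1\}$ and no two consecutive digits equal to $1$; $s_Z(N)=\sum_i d_i(N)$. A point of constancy of $s_Z$ is an integer $N\ge0$ with $s_Z(N+1)=s_Z(N)$. For $n\ge3$ define the integer intervals $\Lambda_n=[F_n,F_{n+1}-1]$ and $\Psi_n=[0,F_n-1]$. For an integer interval $I$ (here $I=\Lambda_n$ or $I=\Psi_n$), let $c_1<c_2<\dots<c_k$ be the points of constancy of $s_Z$ lying in $I$ and let $c_{k+1}$ be the smallest point of constancy of $s_Z$ larger than $\max I$; then $\Delta C_Z(I)$ denotes the word $(c_2-c_1)(c_3-c_2)\cdots(c_{k+1}-c_k)$ over the alphabet of positive integers. *)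

theory Defs
  imports "HOL-Number_Theory.Fib"
begin

definition zeck_set :: "nat \<Rightarrow> nat set" where
  "zeck_set N = (THE S. finite S \<and> (\<forall>i\<in>S. Suc i \<notin> S) \<and> (\<Sum>i\<in>S. fib (i + 2)) = N)"

definition sZ :: "nat \<Rightarrow> nat" where
  "sZ N = card (zeck_set N)"

definition constancy_point :: "nat \<Rightarrow> bool" where
  "constancy_point N \<longleftrightarrow> sZ (N + 1) = sZ N"

fun diffs :: "nat list \<Rightarrow> nat list" where
  "diffs (x # y # ys) = (y - x) # diffs (y # ys)"
| "diffs _ = []"

definition DeltaCZ :: "nat \<Rightarrow> nat \<Rightarrow> nat list" where
  "DeltaCZ a b = diffs (sorted_list_of_set {c \<in> {a..b}. constancy_point c}
                        @ [LEAST c. c > b \<and> constancy_point c])"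

definition Lambda_word :: "nat \<Rightarrow> nat list" where
  "Lambda_word n = DeltaCZ (fib n) (fib (n + 1) - 1)"

definition Psi_word :: "nat \<Rightarrow> nat list" where
  "Psi_word n = DeltaCZ 0 (fib n - 1)"

fun h_letter :: "nat \<Rightarrow> nat list" where
  "h_letter x = (if x = 1 then [1, 4] else if x = 3 then [1, 4] else if x = 4 then [3] else [])"

definition h :: "nat list \<Rightarrow> nat list" where
  "h w = concat (map h_letter w)"

end

theory Submission
  imports Defs
begin

(* Write F_k for fib k. If F_k <= N < F_(k+1), the Zeckendorf expansion of N is that of
   N - F_k together with the digit of F_k, so s_Z(N) = 1 + s_Z(N - F_k). Hence the points of
   constancy in Lambda_(n+1) = [F_(n+1), F_(n+2)) are the translates by F_(n+1) of those in
   Psi_n = [0, F_n) (the right ends F_n - 1 and F_(n+2) - 1 are not points of constancy), and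
   the first point of constancy after F_n - 1 is F_n + 1. This yields
   Delta(Lambda_(n+1)) = Delta(Psi_n) and Delta(Psi_(n+1)) = Delta(Psi_n) Delta(Lambda_n),
   which is the recursion h^(k+2)(3) = h^(k+1)(3) h^k(3) of the iterates of h; the words for
   n = 5 are computed directly. *)

definition zeck_admissible :: "nat set \<Rightarrow> bool" where
  "zeck_admissible S \<longleftrightarrow> finite S \<and> (\<forall>i\<in>S. Suc i \<notin> S)"

abbreviation zeck_value :: "nat set \<Rightarrow> nat" where
  "zeck_value S \<equiv> \<Sum>i\<in>S. fib (i + 2)"

lemma fib_less_fib_imp_less: "fib m < fib n \<Longrightarrow> m < n"
  using fib_mono[of n m] by linarith

lemma le_fib_Suc: "n \<le> fib (Suc n)"
proof (induction n rule: fib.induct)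
  case (3 n)
  have "0 < fib (Suc n)"
    by (simp add: fib_neq_0_nat)
  with "3.IH"(1) show ?case
    by simp
qed simp_all

lemma zeck_value_eq_0_iff: "finite S \<Longrightarrow> zeck_value S = 0 \<longleftrightarrow> S = {}"
  by (simp add: fib_neq_0_nat[THEN less_not_refl3, symmetric] del: fib.simps)

lemma zeck_value_less_fib:
  "zeck_admissible S \<Longrightarrow> S \<subseteq> {..<k} \<Longrightarrow> zeck_value S < fib (k + 2)"
proof (induction k arbitrary: S rule: fib.induct)
  case 1
  then show ?case by simp
next
  case 2
  then have "S = {} \<or> S = {0}" by auto
  then show ?case by (auto simp: numeral_eq_Suc)
next
  case (3 m)
  have fin: "finite S"
    using "3.prems"(1) by (simp add: zeck_admissible_def)
  show ?case
  proof (cases "Suc m \<in> S")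
    case True
    then have "m \<notin> S"
      using "3.prems"(1) by (auto simp: zeck_admissible_def)
    have "zeck_admissible (S - {Suc m})"
      using "3.prems"(1) by (simp add: zeck_admissible_def)
    moreover have "S - {Suc m} \<subseteq> {..<m}"
      using "3.prems"(2) \<open>m \<notin> S\<close> by (auto simp: less_Suc_eq)
    ultimately have "zeck_value (S - {Suc m}) < fib (m + 2)"
      by (rule "3.IH"(2))
    moreover have "zeck_value S = fib (Suc m + 2) + zeck_value (S - {Suc m})"
      by (rule sum.remove[OF fin True])
    ultimately show ?thesis
      by (simp add: numeral_eq_Suc)
  next
    case False
    then have "S \<subseteq> {..<Suc m}"
      using "3.prems"(2) by (auto simp: less_Suc_eq)
    then have "zeck_value S < fib (Suc m + 2)"
      using "3.IH"(1) "3.prems"(1) by blast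
    also have "\<dots> \<le> fib (Suc (Suc m) + 2)"
      by (simp add: fib_mono)
    finally show ?thesis .
  qed
qed

lemma zeck_value_Max_bounds:
  assumes "zeck_admissible S" "S \<noteq> {}"
  shows "fib (Max S + 2) \<le> zeck_value S" "zeck_value S < fib (Max S + 3)"
proof -
  have fin: "finite S"
    using assms(1) by (simp add: zeck_admissible_def)
  then show "fib (Max S + 2) \<le> zeck_value S"
    using assms(2) by (intro member_le_sum) auto
  have "S \<subseteq> {..<Suc (Max S)}"
    using fin by (auto simp: less_Suc_eq_le)
  then have "zeck_value S < fib (Suc (Max S) + 2)"
    by (rule zeck_value_less_fib[OF assms(1)])
  moreover have "Suc (Max S) + 2 = Max S + 3"
    by simp
  ultimately show "zeck_value S < fib (Max S + 3)"
    by argo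
qed

lemma zeck_admissible_unique:
  "zeck_admissible S \<Longrightarrow> zeck_admissible T \<Longrightarrow> zeck_value S = zeck_value T \<Longrightarrow> S = T"
proof (induction "card S" arbitrary: S T rule: less_induct)
  case less
  have fin: "finite S" "finite T"
    using less.prems(1,2) by (simp_all add: zeck_admissible_def)
  show ?case
  proof (cases "S = {} \<or> T = {}")
    case True
    then show ?thesis
      using less.prems(3) zeck_value_eq_0_iff fin by metis
  next
    case False
    then have ne: "S \<noteq> {}" "T \<noteq> {}" by auto
    have "fib (Max S + 2) < fib (Max T + 3)" "fib (Max T + 2) < fib (Max S + 3)"
      using zeck_value_Max_bounds[OF less.prems(1) ne(1)] zeck_value_Max_bounds[OF less.prems(2) ne(2)]
        less.prems(3) by linarith+
    then have "Max S + 2 < Max T + 3" "Max T + 2 < Max S + 3"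
      by (blast dest: fib_less_fib_imp_less)+
    then have max_eq: "Max S = Max T"
      by linarith
    define m where "m = Max S"
    have m: "m \<in> S" "m \<in> T"
      using Max_in[OF fin(1) ne(1)] Max_in[OF fin(2) ne(2)] unfolding m_def max_eq .
    have "zeck_value (S - {m}) = zeck_value (T - {m})"
      using less.prems(3) sum.remove[OF fin(1) m(1), of "\<lambda>i. fib (i + 2)"]
        sum.remove[OF fin(2) m(2), of "\<lambda>i. fib (i + 2)"] by linarith
    moreover have "zeck_admissible (S - {m})" "zeck_admissible (T - {m})"
      using less.prems(1,2) by (simp_all add: zeck_admissible_def)
    moreover have "card (S - {m}) < card S"
      using fin(1) m(1) by (rule card_Diff1_less)
    ultimately have "S - {m} = T - {m}"
      using less.hyps by blast
    then show ?thesis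
      using m by blast
  qed
qed

lemma zeck_exists_below:
  "N < fib (k + 2) \<Longrightarrow> \<exists>S. zeck_admissible S \<and> S \<subseteq> {..<k} \<and> zeck_value S = N"
proof (induction k arbitrary: N rule: fib.induct)
  case 1
  then show ?case
    by (intro exI[of _ "{}"]) (simp add: zeck_admissible_def)
next
  case 2
  then have "N = 0 \<or> N = 1"
    by (simp add: numeral_eq_Suc less_Suc_eq)
  moreover have "zeck_admissible {}" "zeck_admissible {0}"
    by (simp_all add: zeck_admissible_def)
  ultimately show ?case
    by force
next
  case (3 m)
  show ?case
  proof (cases "N < fib (Suc m + 2)")
    case True
    then show ?thesis
      using "3.IH"(1) by fastforce
  next
    case False
    have "fib (Suc (Suc m) + 2) = fib (Suc m + 2) + fib (m + 2)"
      by (simp add: numeral_eq_Suc)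
    then have "N - fib (Suc m + 2) < fib (m + 2)"
      using "3.prems" False by linarith
    then obtain S where S: "zeck_admissible S" "S \<subseteq> {..<m}" "zeck_value S = N - fib (Suc m + 2)"
      using "3.IH"(2) by blast
    have fin: "finite S"
      using S(1) by (simp add: zeck_admissible_def)
    have "zeck_admissible (insert (Suc m) S)" "insert (Suc m) S \<subseteq> {..<Suc (Suc m)}"
      using S(1,2) by (auto simp: zeck_admissible_def)
    moreover have "zeck_value (insert (Suc m) S) = N"
      using S(2,3) False fin by (subst sum.insert) auto
    ultimately show ?thesis
      by blast
  qed
qed

lemma zeck_exists: "\<exists>S. zeck_admissible S \<and> zeck_value S = N"
proof -
  have "N < fib (N + 2)"
    using le_fib_Suc[of "Suc N"] by simp
  then show ?thesis
    using zeck_exists_below by blast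
qed

lemma zeck_set_eqI:
  assumes "zeck_admissible S" "zeck_value S = N"
  shows "zeck_set N = S"
  unfolding zeck_set_def
proof (rule the_equality)
  show "finite S \<and> (\<forall>i\<in>S. Suc i \<notin> S) \<and> zeck_value S = N"
    using assms by (simp add: zeck_admissible_def)
next
  fix T
  assume "finite T \<and> (\<forall>i\<in>T. Suc i \<notin> T) \<and> zeck_value T = N"
  then show "T = S"
    using assms by (intro zeck_admissible_unique) (simp_all add: zeck_admissible_def)
qed

lemma sZ_zeck_value: "zeck_admissible S \<Longrightarrow> sZ (zeck_value S) = card S"
  by (simp add: sZ_def zeck_set_eqI)

lemma sZ_0: "sZ 0 = 0"
  using sZ_zeck_value[of "{}"] by (simp add: zeck_admissible_def)

lemma sZ_fib:
  assumes "2 \<le> k"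
  shows "sZ (fib k) = 1"
proof -
  obtain j where "k = j + 2"
    using assms le_iff_add by (metis add.commute)
  then show ?thesis
    using sZ_zeck_value[of "{j}"] by (simp add: zeck_admissible_def del: fib.simps)
qed

lemma sZ_pos:
  assumes "0 < N"
  shows "0 < sZ N"
proof -
  obtain S where S: "zeck_admissible S" "zeck_value S = N"
    using zeck_exists by blast
  then have "S \<noteq> {}"
    using assms by auto
  moreover have "finite S"
    using S(1) by (simp add: zeck_admissible_def)
  moreover have "sZ N = card S"
    using sZ_zeck_value[OF S(1)] S(2) by metis
  ultimately show ?thesis
    by (simp add: card_gt_0_iff)
qed

lemma sZ_greedy:
  assumes "2 \<le> k" "fib k \<le> N" "N < fib (Suc k)"
  shows "sZ N = Suc (sZ (N - fib k))"
proof -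
  obtain j where k: "k = j + 2"
    using assms(1) le_iff_add by (metis add.commute)
  obtain S where S: "zeck_admissible S" "zeck_value S = N - fib k"
    using zeck_exists by blast
  have fin: "finite S"
    using S(1) by (simp add: zeck_admissible_def)
  have "fib (Suc k) = fib k + fib (Suc j)"
    using k by simp
  then have rest_less: "N - fib k < fib (Suc j)"
    using assms(2,3) by linarith
  have below: "Suc i < j" if "i \<in> S" for i
  proof -
    have "fib (i + 2) \<le> N - fib k"
      using S(2) fin that member_le_sum[of i S "\<lambda>i. fib (i + 2)"] by simp
    then have "fib (i + 2) < fib (Suc j)"
      using rest_less by linarith
    then have "i + 2 < Suc j"
      by (rule fib_less_fib_imp_less)
    then show ?thesis
      by simp
  qed
  then have "j \<notin> S"
    by fastforce
  have "zeck_admissible (insert j S)"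
    using S(1) by (auto simp: zeck_admissible_def dest: below)
  moreover have "zeck_value (insert j S) = N"
    using S(2) fin \<open>j \<notin> S\<close> assms(2) k by (simp del: fib.simps)
  ultimately have "sZ N = card (insert j S)"
    using sZ_zeck_value by metis
  also have "\<dots> = Suc (sZ (N - fib k))"
    using sZ_zeck_value[OF S(1)] S(2) fin \<open>j \<notin> S\<close> by simp
  finally show ?thesis .
qed

lemma fib_Suc_eq: "0 < k \<Longrightarrow> fib (Suc k) = fib k + fib (k - 1)"
  by (cases k) simp_all

lemma fib_pred_ge: "k - 2 \<le> fib (k - 1)"
  using le_fib_Suc[of "k - 2"] by (cases "k < 2") (simp_all add: Suc_diff_Suc numeral_2_eq_2)

lemma constancy_point_shift:
  assumes "2 \<le> k" "fib k \<le> N" "Suc N < fib (Suc k)"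
  shows "constancy_point N \<longleftrightarrow> constancy_point (N - fib k)"
  using sZ_greedy[of k N] sZ_greedy[of k "Suc N"] assms
  by (simp add: constancy_point_def Suc_diff_le)

lemma not_constancy_point_fib:
  assumes "4 \<le> k"
  shows "\<not> constancy_point (fib k)"
proof -
  have "Suc (fib k) < fib (Suc k)"
    using fib_Suc_eq[of k] fib_pred_ge[of k] assms by simp
  then have "sZ (Suc (fib k)) = 2"
    using sZ_greedy[of k "Suc (fib k)"] sZ_fib[of 2] assms by simp
  then show ?thesis
    using sZ_fib[of k] assms by (simp add: constancy_point_def)
qed

lemma constancy_point_Suc_fib:
  assumes "5 \<le> k"
  shows "constancy_point (Suc (fib k))"
proof -
  have "fib k + 2 < fib (Suc k)"
    using fib_Suc_eq[of k] fib_pred_ge[of k] assms by simp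
  moreover have "sZ 1 = 1" "sZ 2 = 1"
    using sZ_fib[of 2] sZ_fib[of 3] by (simp_all add: numeral_eq_Suc)
  ultimately show ?thesis
    using sZ_greedy[of k "fib k + 1"] sZ_greedy[of k "fib k + 2"] assms
    by (simp add: constancy_point_def)
qed

lemma not_constancy_point_fib_minus_1:
  assumes "5 \<le> k"
  shows "\<not> constancy_point (fib k - 1)"
proof -
  obtain j where k: "k = Suc j" and "4 \<le> j"
    using assms by (cases k) simp_all
  have "fib j + fib (j - 1) = fib k" "2 \<le> fib (j - 1)"
    using fib_Suc_eq[of j] fib_pred_ge[of j] k \<open>4 \<le> j\<close> by simp_all
  then have "sZ (fib k - 1) = Suc (sZ (fib k - 1 - fib j))"
    using k \<open>4 \<le> j\<close> by (intro sZ_greedy) simp_all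
  also have "fib k - 1 - fib j = fib (j - 1) - 1"
    using \<open>fib j + fib (j - 1) = fib k\<close> by linarith
  finally have "sZ (fib k - 1) = Suc (sZ (fib (j - 1) - 1))" .
  moreover have "0 < sZ (fib (j - 1) - 1)"
    using \<open>2 \<le> fib (j - 1)\<close> by (intro sZ_pos) simp
  moreover have "sZ (fib k) = 1" "0 < fib k"
    using sZ_fib[of k] fib_neq_0_nat[of k] assms by simp_all
  ultimately show ?thesis
    by (simp add: constancy_point_def)
qed

lemma least_constancy_point_after_fib:
  assumes "5 \<le> k"
  shows "(LEAST c. fib k - 1 < c \<and> constancy_point c) = Suc (fib k)"
proof (rule Least_equality)
  show "fib k - 1 < Suc (fib k) \<and> constancy_point (Suc (fib k))"
    using constancy_point_Suc_fib[OF assms] by simp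
next
  fix c
  assume "fib k - 1 < c \<and> constancy_point c"
  moreover have "0 < fib k"
    using assms by (simp add: fib_neq_0_nat)
  ultimately show "Suc (fib k) \<le> c"
    using not_constancy_point_fib[of k] assms by (cases "c = fib k") auto
qed

lemma sorted_list_of_set_filter_atLeastAtMost:
  "sorted_list_of_set {x \<in> {a..b}. P x} = filter P [a..<Suc b]"
  by (rule sorted_distinct_set_unique) (auto simp: sorted_wrt_filter simp del: upt_Suc)

lemma diffs_append: "diffs (xs @ y # ys) = diffs (xs @ [y]) @ diffs (y # ys)"
  by (induction xs rule: diffs.induct) (auto simp: Cons_eq_append_conv)

lemma diffs_map_add: "diffs (map (\<lambda>x. x + c) xs) = diffs xs"
  by (induction xs rule: diffs.induct) auto

lemma DeltaCZ_upto_fib: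
  assumes "5 \<le> k"
  shows "DeltaCZ a (fib k - 1) = diffs (filter constancy_point [a..<fib k] @ [Suc (fib k)])"
proof -
  have "Suc (fib k - 1) = fib k"
    using assms by (simp add: fib_neq_0_nat)
  then show ?thesis
    unfolding DeltaCZ_def sorted_list_of_set_filter_atLeastAtMost
    using least_constancy_point_after_fib[OF assms] by simp
qed

lemma Psi_word_eq:
  "5 \<le> n \<Longrightarrow> Psi_word n = diffs (filter constancy_point [0..<fib n] @ [Suc (fib n)])"
  unfolding Psi_word_def by (rule DeltaCZ_upto_fib)

lemma Lambda_word_eq:
  "5 \<le> n \<Longrightarrow>
   Lambda_word n = diffs (filter constancy_point [fib n..<fib (Suc n)] @ [Suc (fib (Suc n))])"
  unfolding Lambda_word_def Suc_eq_plus1[symmetric] by (rule DeltaCZ_upto_fib) simp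

lemma filter_constancy_point_Lambda:
  assumes "5 \<le> n"
  shows "filter constancy_point [fib n..<fib (Suc n)] =
    Suc (fib n) # filter constancy_point [fib n + 2..<fib (Suc n)]"
proof -
  have "fib n + 2 \<le> fib (Suc n)"
    using fib_Suc_eq[of n] fib_pred_ge[of n] assms by simp
  then have "[fib n..<fib (Suc n)] = fib n # Suc (fib n) # [fib n + 2..<fib (Suc n)]"
    by (simp add: upt_conv_Cons)
  then show ?thesis
    using not_constancy_point_fib[of n] constancy_point_Suc_fib[OF assms] assms by simp
qed

lemma Psi_word_Suc:
  assumes "5 \<le> n"
  shows "Psi_word (Suc n) = Psi_word n @ Lambda_word n"
proof -
  define A where "A = filter constancy_point [0..<fib n]"
  define B where "B = filter constancy_point [fib n + 2..<fib (Suc n)] @ [Suc (fib (Suc n))]"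
  have "[0..<fib (Suc n)] = [0..<fib n] @ [fib n..<fib (Suc n)]"
    using upt_add_eq_append[of 0 "fib n" "fib (n - 1)"] fib_Suc_eq[of n] assms by simp
  then have "Psi_word (Suc n) = diffs (A @ Suc (fib n) # B)"
    using Psi_word_eq[of "Suc n"] filter_constancy_point_Lambda[OF assms] assms
    by (simp add: A_def B_def)
  also have "\<dots> = diffs (A @ [Suc (fib n)]) @ diffs (Suc (fib n) # B)"
    by (rule diffs_append)
  also have "\<dots> = Psi_word n @ Lambda_word n"
    using Psi_word_eq[OF assms] Lambda_word_eq[OF assms] filter_constancy_point_Lambda[OF assms]
    by (simp add: A_def B_def)
  finally show ?thesis .
qed

lemma filter_constancy_point_shift:
  assumes "5 \<le> n"
  shows "filter constancy_point [fib (Suc n)..<fib (Suc (Suc n))] =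
    map (\<lambda>x. x + fib (Suc n)) (filter constancy_point [0..<fib n])"
proof -
  have "[fib (Suc n)..<fib (Suc (Suc n))] = map (\<lambda>x. x + fib (Suc n)) [0..<fib n]"
    by (simp add: map_add_upt add.commute)
  moreover have "constancy_point (x + fib (Suc n)) \<longleftrightarrow> constancy_point x" if "x < fib n" for x
  proof (cases "Suc x < fib n")
    case True
    then show ?thesis
      using constancy_point_shift[of "Suc n" "x + fib (Suc n)"] assms by (simp add: add.commute)
  next
    case False
    with that have "x = fib n - 1" "x + fib (Suc n) = fib (Suc (Suc n)) - 1"
      by simp_all
    then show ?thesis
      using not_constancy_point_fib_minus_1[of n] not_constancy_point_fib_minus_1[of "Suc (Suc n)"]
        assms by simp
  qed
  then have "filter (\<lambda>x. constancy_point (x + fib (Suc n))) [0..<fib n] =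
    filter constancy_point [0..<fib n]"
    by (intro filter_cong) simp_all
  ultimately show ?thesis
    by (simp add: filter_map comp_def)
qed

lemma Lambda_word_Suc:
  assumes "5 \<le> n"
  shows "Lambda_word (Suc n) = Psi_word n"
proof -
  have "Lambda_word (Suc n) =
    diffs (map (\<lambda>x. x + fib (Suc n)) (filter constancy_point [0..<fib n] @ [Suc (fib n)]))"
    using Lambda_word_eq[of "Suc n"] filter_constancy_point_shift[OF assms] assms
    by (simp add: add.commute)
  also have "\<dots> = Psi_word n"
    by (simp only: diffs_map_add Psi_word_eq[OF assms])
  finally show ?thesis .
qed

lemma Psi_word_5: "Psi_word 5 = [1, 4]"
proof -
  have fib: "fib 3 = 2" "fib 4 = 3" "fib 5 = 5"
    by (simp_all add: numeral_eq_Suc)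
  have sZ: "sZ 1 = 1" "sZ 2 = 1" "sZ 3 = 1"
    using sZ_fib[of 2] sZ_fib[of 3] sZ_fib[of 4] fib by simp_all
  have "\<not> constancy_point 0"
    using sZ_0 sZ(1) by (simp add: constancy_point_def)
  moreover have "constancy_point 1" "constancy_point 2"
    using sZ unfolding constancy_point_def by (simp_all add: numeral_eq_Suc)
  moreover have "\<not> constancy_point 3" "\<not> constancy_point 4"
    using not_constancy_point_fib[of 4] not_constancy_point_fib_minus_1[of 5] fib by simp_all
  moreover have "[0..<5] = [0, 1, 2, 3, 4::nat]"
    by (simp add: upt_rec)
  ultimately show ?thesis
    using Psi_word_eq[of 5] fib by simp
qed

lemma Lambda_word_5: "Lambda_word 5 = [3]"
proof -
  have fib: "fib 5 = 5" "fib 6 = 8"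
    by (simp_all add: numeral_eq_Suc)
  have "filter constancy_point [7..<8] = []"
    using not_constancy_point_fib_minus_1[of 6] fib by (simp add: upt_rec)
  then show ?thesis
    using Lambda_word_eq[of 5] filter_constancy_point_Lambda[of 5] fib by (simp add: numeral_eq_Suc)
qed

lemma h_append: "h (xs @ ys) = h xs @ h ys"
  by (simp add: h_def)

lemma funpow_h_append: "(h ^^ k) (xs @ ys) = (h ^^ k) xs @ (h ^^ k) ys"
  by (induction k) (simp_all add: h_append)

lemma funpow_h_3_Suc_Suc: "(h ^^ Suc (Suc k)) [3] = (h ^^ Suc k) [3] @ (h ^^ k) [3]"
proof -
  have "(h ^^ Suc (Suc k)) [3] = (h ^^ k) (h [3] @ [3])"
    by (simp only: funpow_Suc_right comp_apply) (simp add: h_def)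
  also have "\<dots> = (h ^^ Suc k) [3] @ (h ^^ k) [3]"
    by (simp only: funpow_h_append funpow_Suc_right comp_apply)
  finally show ?thesis .
qed

lemma Psi_word_funpow_h: "Psi_word (k + 5) = (h ^^ Suc k) [3]"
proof (induction k rule: fib.induct)
  case 1
  show ?case
    using Psi_word_5 by (simp add: h_def)
next
  case 2
  show ?case
    using Psi_word_Suc[of 5] Psi_word_5 Lambda_word_5 by (simp add: h_def numeral_eq_Suc)
next
  case (3 k)
  have "Psi_word (Suc (Suc k) + 5) = Psi_word (Suc k + 5) @ Lambda_word (Suc (k + 5))"
    using Psi_word_Suc[of "Suc k + 5"] by simp
  also have "\<dots> = Psi_word (Suc k + 5) @ Psi_word (k + 5)"
    using Lambda_word_Suc[of "k + 5"] by simp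
  also have "\<dots> = (h ^^ Suc (Suc (Suc k))) [3]"
    using "3.IH" funpow_h_3_Suc_Suc[of "Suc k"] by simp
  finally show ?case .
qed

theorem proposition1:
  fixes n :: nat
  assumes "n \<ge> 5"
  shows "Psi_word n = (h ^^ (n - 4)) [3] \<and> Lambda_word n = (h ^^ (n - 5)) [3]"
proof -
  obtain k where n: "n = k + 5"
    using assms le_iff_add by (metis add.commute)
  have "Lambda_word n = (h ^^ k) [3]"
  proof (cases k)
    case 0
    then show ?thesis
      using n Lambda_word_5 by simp
  next
    case (Suc j)
    then show ?thesis
      using n Lambda_word_Suc[of "j + 5"] Psi_word_funpow_h[of j] by simp
  qed
  moreover have "Psi_word n = (h ^^ Suc k) [3]"
    using n Psi_word_funpow_h by simp
  ultimately show ?thesis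
    using n by (simp add: numeral_eq_Suc)
qed

end
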